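(* Let $\theta\in(0,1)$ be irrational and $k\in\Lambda$. Then any two distinct component intervals $I_k(i),I_k(i')$ ($1\le i\ne i'\le q_k$) of $D_k$ are separated by a gap of length at least $\tfrac17\|q_{k-1}\theta\|$.
   Context: $\mathbb T=\mathbb R/\mathbb Z$, points identified with fractional parts; $(x-a,x+b)$ denotes the projection to $\mathbb T$ of the real interval. $\|t\|$ is the distance to the nearest integer. $\theta=[0;a_1,a_2,\dots]$ with convergent denominators $q_0=1$, $q_{k+1}=a_{k+1}q_k+q_{k-1}$. For $k\ge0$: $r_{k+1}=\lfloor\sqrt{4a_{k+1}+5}\rfloor-3$ if $a_{k+1}\ne2$ and $r_{k+1}=1$ if $a_{k+1}=2$; $\tilde r_{k+1}=2$ if $a_{k+1}=4$ and $a_{k+2}\ge2$, and $\tilde r_{k+1}=r_{k+1}$ otherwise. $\Lambda=\{k\in\mathbb N: a_{k+1}\ge3\text{ or }a_{k+2}=2\}$. For $k\in\Lambda$ put $R_k=\tilde r_{k+1}\|q_k\theta\|+\|q_{k+1}\theta\|$, and $L_k=\|q_k\theta\|$ if $a_{k+2}\ne2$, $L_k=\|q_{k+1}\theta\|+\|q_{k+2}\theta\|$ if $a_{k+2}=2$; set $I_k(i)=(i\theta-L_k,\,i\theta+R_k)$ if $k$ is even and $I_k(i)=(i\theta-R_k,\,i\theta+L_k)$ if $k$ is odd, and $D_k=\bigcup_{i=1}^{q_k}I_k(i)$. *)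

theory Defs
  imports Complex_Main
begin

definition dnint :: "real \<Rightarrow> real" where
  "dnint t = \<bar>t - of_int (round t)\<bar>"

fun cf_x :: "real \<Rightarrow> nat \<Rightarrow> real" where
  "cf_x th 0 = th"
| "cf_x th (Suc n) = frac (1 / cf_x th n)"

text \<open>Partial quotients: theta = [0; a_1, a_2, ...], a_(n+1) = floor(1/x_n); a_0 = 0.\<close>
fun cf_a :: "real \<Rightarrow> nat \<Rightarrow> nat" where
  "cf_a th 0 = 0"
| "cf_a th (Suc n) = nat \<lfloor>1 / cf_x th n\<rfloor>"

text \<open>Convergent denominators: q_0 = 1, q_1 = a_1 (q_(-1) = 0), q_(k+1) = a_(k+1) q_k + q_(k-1).\<close>
fun cf_q :: "real \<Rightarrow> nat \<Rightarrow> nat" where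
  "cf_q th 0 = 1"
| "cf_q th (Suc 0) = cf_a th 1"
| "cf_q th (Suc (Suc n)) = cf_a th (n + 2) * cf_q th (Suc n) + cf_q th n"

text \<open>r_(k+1), as a function of k.\<close>
definition r_coef :: "real \<Rightarrow> nat \<Rightarrow> int" where
  "r_coef th k = (if cf_a th (k+1) = 2 then 1
                  else \<lfloor>sqrt (4 * real (cf_a th (k+1)) + 5)\<rfloor> - 3)"

text \<open>tilde r_(k+1), as a function of k.\<close>
definition rt_coef :: "real \<Rightarrow> nat \<Rightarrow> int" where
  "rt_coef th k = (if cf_a th (k+1) = 4 \<and> cf_a th (k+2) \<ge> 2 then 2 else r_coef th k)"

definition Lambda_set :: "real \<Rightarrow> nat set" where
  "Lambda_set th = {k. cf_a th (k+1) \<ge> 3 \<or> cf_a th (k+2) = 2}"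

definition R_len :: "real \<Rightarrow> nat \<Rightarrow> real" where
  "R_len th k = of_int (rt_coef th k) * dnint (real (cf_q th k) * th)
                + dnint (real (cf_q th (k+1)) * th)"

definition L_len :: "real \<Rightarrow> nat \<Rightarrow> real" where
  "L_len th k = (if cf_a th (k+2) \<noteq> 2 then dnint (real (cf_q th k) * th)
                 else dnint (real (cf_q th (k+1)) * th) + dnint (real (cf_q th (k+2)) * th))"

text \<open>The interval I_k(i) on the circle, represented by the set of real offsets t
  such that i*theta + t (mod 1) lies in it: (-L_k, R_k) for k even, (-R_k, L_k) for k odd.\<close>
definition I_offsets :: "real \<Rightarrow> nat \<Rightarrow> real set" where
  "I_offsets th k = (if even k then {- L_len th k <..< R_len th k}
                     else {- R_len th k <..< L_len th k})"

text \<open>Points of I_k(i), as real representatives (points of T = R/Z are taken mod 1).\<close>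
definition I_int :: "real \<Rightarrow> nat \<Rightarrow> nat \<Rightarrow> real set" where
  "I_int th k i = (\<lambda>t. real i * th + t) ` I_offsets th k"

end

theory Submission
  imports Defs
begin

text \<open>Write \<open>D\<^sub>n = |q\<^sub>n\<theta> - p\<^sub>n|\<close> for the error of the \<open>n\<close>-th convergent. Two distinct centres
  \<open>i\<theta>, i'\<theta>\<close> with \<open>1 \<le> i, i' \<le> q\<^sub>k\<close> differ by \<open>j\<theta>\<close> with \<open>0 < |j| < q\<^sub>k\<close>, and by the best
  approximation property of convergents \<open>\<parallel>j\<theta>\<parallel> \<ge> D\<^sub>k\<^sub>-\<^sub>1\<close>. Each interval has length
  \<open>L\<^sub>k + R\<^sub>k\<close>, and the bound \<open>r\<^sub>k\<^sub>+\<^sub>1 + 1 \<le> (6a\<^sub>k\<^sub>+\<^sub>1 + 2)/7\<close> (\<open>-1\<close> instead of \<open>+2\<close> when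
  \<open>a\<^sub>k\<^sub>+\<^sub>1 \<ge> 3\<close>) together with \<open>D\<^sub>k\<^sub>-\<^sub>1 = a\<^sub>k\<^sub>+\<^sub>1 D\<^sub>k + D\<^sub>k\<^sub>+\<^sub>1\<close> gives \<open>7(L\<^sub>k + R\<^sub>k) \<le> 6 D\<^sub>k\<^sub>-\<^sub>1\<close>.
  Hence the gap is at least \<open>D\<^sub>k\<^sub>-\<^sub>1/7 \<ge> \<parallel>q\<^sub>k\<^sub>-\<^sub>1\<theta>\<parallel>/7\<close>.\<close>

lemma frac_irrational:
  fixes y :: real
  assumes "y \<notin> \<rat>"
  shows "frac y \<notin> \<rat>" "0 < frac y"
proof -
  show "frac y \<notin> \<rat>"
  proof
    assume "frac y \<in> \<rat>"
    then have "frac y + of_int \<lfloor>y\<rfloor> \<in> \<rat>" by simp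
    then show False using assms by (simp add: frac_def)
  qed
  have "y \<notin> \<int>" using assms Ints_subset_Rats by blast
  then show "0 < frac y" using frac_ge_0[of y] frac_eq_0_iff[of y] by linarith
qed

lemma cf_x_bounds:
  assumes "0 < th" "th < 1" "th \<notin> \<rat>"
  shows "0 < cf_x th n" "cf_x th n < 1" "cf_x th n \<notin> \<rat>"
proof -
  have "0 < cf_x th n \<and> cf_x th n < 1 \<and> cf_x th n \<notin> \<rat>"
  proof (induction n)
    case 0
    then show ?case using assms by simp
  next
    case (Suc n)
    then have "1 / cf_x th n \<notin> \<rat>" using Rats_inverse by (metis inverse_eq_divide inverse_inverse_eq)
    then show ?case using frac_irrational frac_lt_1 by simp
  qed
  then show "0 < cf_x th n" "cf_x th n < 1" "cf_x th n \<notin> \<rat>" by auto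
qed

lemma cf_a_Suc_ge_1:
  assumes "0 < th" "th < 1" "th \<notin> \<rat>"
  shows "1 \<le> cf_a th (Suc n)"
proof -
  have "1 \<le> \<lfloor>1 / cf_x th n\<rfloor>" using cf_x_bounds[OF assms, of n] by simp
  then show ?thesis using nat_mono by fastforce
qed

lemma cf_a_Suc_eq:
  assumes "0 < th" "th < 1" "th \<notin> \<rat>"
  shows "real (cf_a th (Suc n)) = 1 / cf_x th n - cf_x th (Suc n)"
proof -
  have "0 \<le> \<lfloor>1 / cf_x th n\<rfloor>" using cf_x_bounds[OF assms, of n] by simp
  then have "real (nat \<lfloor>1 / cf_x th n\<rfloor>) = of_int \<lfloor>1 / cf_x th n\<rfloor>" by (rule of_nat_nat)
  then show ?thesis by (simp add: frac_def)
qed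

declare cf_x.simps(2)[simp del] cf_a.simps(2)[simp del]

text \<open>\<open>cf_dist th n = |q\<^sub>n\<theta> - p\<^sub>n|\<close> (see \<open>cf_q_mult_minus_cf_p\<close>); the product form of
  Gauss-map iterates makes positivity and the recurrence immediate.\<close>
definition cf_dist :: "real \<Rightarrow> nat \<Rightarrow> real" where
  "cf_dist th n = (\<Prod>j\<le>n. cf_x th j)"

lemma cf_dist_0: "cf_dist th 0 = th"
  by (simp add: cf_dist_def)

lemma cf_dist_Suc: "cf_dist th (Suc n) = cf_dist th n * cf_x th (Suc n)"
  by (simp add: cf_dist_def atMost_Suc mult.commute)

lemma cf_dist_pos:
  assumes "0 < th" "th < 1" "th \<notin> \<rat>"
  shows "0 < cf_dist th n"
  unfolding cf_dist_def using cf_x_bounds[OF assms] by (simp add: prod_pos)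

lemma cf_dist_Suc_less:
  assumes "0 < th" "th < 1" "th \<notin> \<rat>"
  shows "cf_dist th (Suc n) < cf_dist th n"
  using cf_dist_Suc[of th n] cf_dist_pos[OF assms, of n] cf_x_bounds[OF assms, of "Suc n"] by simp

lemma cf_dist_1:
  assumes "0 < th" "th < 1" "th \<notin> \<rat>"
  shows "cf_dist th 1 = 1 - real (cf_a th 1) * th"
  using cf_dist_Suc[of th 0] cf_a_Suc_eq[OF assms, of 0] assms(1)
  by (simp add: cf_dist_0 field_simps)

lemma cf_dist_Suc_Suc:
  assumes "0 < th" "th < 1" "th \<notin> \<rat>"
  shows "cf_dist th (Suc (Suc n)) = cf_dist th n - real (cf_a th (n + 2)) * cf_dist th (Suc n)"
proof -
  have "cf_dist th (Suc (Suc n)) = cf_dist th n * (cf_x th (Suc n) * cf_x th (Suc (Suc n)))"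
    by (simp add: cf_dist_Suc)
  also have "cf_x th (Suc n) * cf_x th (Suc (Suc n)) = 1 - real (cf_a th (n + 2)) * cf_x th (Suc n)"
    using cf_a_Suc_eq[OF assms, of "Suc n"] cf_x_bounds(1)[OF assms, of "Suc n"]
    by (simp add: field_simps)
  finally show ?thesis by (simp add: cf_dist_Suc algebra_simps)
qed

fun cf_p :: "real \<Rightarrow> nat \<Rightarrow> nat" where
  "cf_p th 0 = 0"
| "cf_p th (Suc 0) = 1"
| "cf_p th (Suc (Suc n)) = cf_a th (n + 2) * cf_p th (Suc n) + cf_p th n"

lemma cf_q_mult_minus_cf_p:
  assumes "0 < th" "th < 1" "th \<notin> \<rat>"
  shows "real (cf_q th n) * th - real (cf_p th n) = (-1) ^ n * cf_dist th n"
proof (induction n rule: induct_nat_012)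
  case 0
  then show ?case by (simp add: cf_dist_0)
next
  case 1
  then show ?case using cf_dist_1[OF assms] by simp
next
  case (ge2 n)
  have "real (cf_q th (Suc (Suc n))) * th - real (cf_p th (Suc (Suc n)))
      = real (cf_a th (n + 2)) * (real (cf_q th (Suc n)) * th - real (cf_p th (Suc n)))
        + (real (cf_q th n) * th - real (cf_p th n))"
    by (simp add: algebra_simps)
  also have "\<dots> = real (cf_a th (n + 2)) * ((-1) ^ Suc n * cf_dist th (Suc n)) + (-1) ^ n * cf_dist th n"
    by (simp only: ge2)
  also have "\<dots> = (-1) ^ n * (cf_dist th n - real (cf_a th (n + 2)) * cf_dist th (Suc n))"
    by (simp add: algebra_simps)
  finally show ?case by (simp add: cf_dist_Suc_Suc[OF assms])
qed

lemma cf_q_cf_p_det: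
  "int (cf_q th (Suc n)) * int (cf_p th n) - int (cf_p th (Suc n)) * int (cf_q th n) = (-1) ^ Suc n"
proof (induction n)
  case 0
  then show ?case by simp
next
  case (Suc n)
  have "int (cf_q th (Suc (Suc n))) * int (cf_p th (Suc n)) - int (cf_p th (Suc (Suc n))) * int (cf_q th (Suc n))
      = - (int (cf_q th (Suc n)) * int (cf_p th n) - int (cf_p th (Suc n)) * int (cf_q th n))"
    by (simp add: algebra_simps)
  then show ?case using Suc by simp
qed

lemma unimodular_decomp:
  fixes Q0 Q1 P0 P1 j p :: int
  assumes "\<bar>Q1 * P0 - P1 * Q0\<bar> = 1"
  obtains u v where "j = u * Q1 + v * Q0" "p = u * P1 + v * P0"
proof -
  define d where "d = Q1 * P0 - P1 * Q0"
  have dd: "d * d = 1" using assms abs_mult_self_eq[of d] by (simp add: d_def[symmetric])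
  define u where "u = d * (j * P0 - p * Q0)"
  define v where "v = d * (p * Q1 - j * P1)"
  have "u * Q1 + v * Q0 = d * (j * (Q1 * P0 - P1 * Q0))"
    by (simp add: u_def v_def algebra_simps)
  also have "\<dots> = j" using dd unfolding d_def[symmetric] by (simp add: algebra_simps)
  finally have j: "j = u * Q1 + v * Q0" ..
  have "u * P1 + v * P0 = d * (p * (Q1 * P0 - P1 * Q0))"
    by (simp add: u_def v_def algebra_simps)
  also have "\<dots> = p" using dd unfolding d_def[symmetric] by (simp add: algebra_simps)
  finally have p: "p = u * P1 + v * P0" ..
  from j p show ?thesis by (rule that)
qed

lemma short_combination_signs:
  fixes u v Q0 Q1 :: int
  assumes "0 \<le> Q0" "0 \<le> Q1" "u * Q1 + v * Q0 \<noteq> 0" "\<bar>u * Q1 + v * Q0\<bar> < Q1"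
  shows "v \<noteq> 0" "u * v \<le> 0"
proof -
  show "v \<noteq> 0"
  proof
    assume "v = 0"
    then have "u \<noteq> 0" "\<bar>u\<bar> * Q1 < Q1" using assms by (auto simp: abs_mult)
    then show False using mult_right_mono[of 1 "\<bar>u\<bar>" Q1] assms(2) by linarith
  qed
  show "u * v \<le> 0"
  proof (rule ccontr)
    assume "\<not> u * v \<le> 0"
    then consider "0 < u" "0 < v" | "u < 0" "v < 0" using zero_less_mult_iff[of u v] by linarith
    then have "Q1 \<le> \<bar>u * Q1 + v * Q0\<bar>"
    proof cases
      case 1
      then show ?thesis
        using mult_right_mono[of 1 u Q1] mult_nonneg_nonneg[of v Q0] assms(1,2) by linarith
    next
      case 2
      then show ?thesis
        using mult_right_mono[of 1 "- u" Q1] mult_nonneg_nonneg[of "- v" Q0] assms(1,2) by linarith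
    qed
    then show False using assms(4) by simp
  qed
qed

lemma abs_le_abs_add_of_mult_nonneg:
  fixes a b :: "'a::linordered_idom"
  assumes "0 \<le> a * b"
  shows "\<bar>b\<bar> \<le> \<bar>a + b\<bar>"
  using assms by (auto simp: zero_le_mult_iff abs_if)

text \<open>Writing \<open>(j, p) = u(q\<^sub>m\<^sub>+\<^sub>1, p\<^sub>m\<^sub>+\<^sub>1) + v(q\<^sub>m, p\<^sub>m)\<close> with \<open>v \<noteq> 0\<close> and
  \<open>uv \<le> 0\<close>, both summands of \<open>j\<theta> - p = u(q\<^sub>m\<^sub>+\<^sub>1\<theta> - p\<^sub>m\<^sub>+\<^sub>1) + v(q\<^sub>m\<theta> - p\<^sub>m)\<close> have the same sign,
  since the errors of consecutive convergents alternate.\<close>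
lemma cf_dist_le_dnint_mult:
  assumes "0 < th" "th < 1" "th \<notin> \<rat>"
    and "j \<noteq> 0" "\<bar>j\<bar> < int (cf_q th (Suc m))"
  shows "cf_dist th m \<le> dnint (of_int j * th)"
proof -
  define p where "p = round (of_int j * th)"
  define E0 where "E0 = real (cf_q th m) * th - real (cf_p th m)"
  define E1 where "E1 = real (cf_q th (Suc m)) * th - real (cf_p th (Suc m))"
  have "\<bar>int (cf_q th (Suc m)) * int (cf_p th m) - int (cf_p th (Suc m)) * int (cf_q th m)\<bar> = 1"
    by (simp add: cf_q_cf_p_det)
  then obtain u v where j: "j = u * int (cf_q th (Suc m)) + v * int (cf_q th m)"
    and p: "p = u * int (cf_p th (Suc m)) + v * int (cf_p th m)"
    by (rule unimodular_decomp)
  have v: "v \<noteq> 0" "u * v \<le> 0"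
    using short_combination_signs[of "int (cf_q th m)" "int (cf_q th (Suc m))" u v] j assms(4,5)
    by auto
  have E0: "\<bar>E0\<bar> = cf_dist th m"
    using cf_q_mult_minus_cf_p[OF assms(1-3), of m] cf_dist_pos[OF assms(1-3), of m]
    by (simp add: E0_def abs_mult)
  have "E1 * E0 = - (cf_dist th (Suc m) * cf_dist th m)"
    using cf_q_mult_minus_cf_p[OF assms(1-3), of m] cf_q_mult_minus_cf_p[OF assms(1-3), of "Suc m"]
    by (simp add: E0_def E1_def)
  then have "E1 * E0 \<le> 0"
    using mult_pos_pos[OF cf_dist_pos[OF assms(1-3), of "Suc m"] cf_dist_pos[OF assms(1-3), of m]]
    by simp
  moreover have "real_of_int u * real_of_int v \<le> 0" using v(2) by (metis of_int_le_0_iff of_int_mult)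
  ultimately have same_sign: "0 \<le> (of_int u * E1) * (of_int v * E0)"
    using mult_nonpos_nonpos[of "of_int u * of_int v" "E1 * E0"] by (simp add: algebra_simps)
  have "cf_dist th m \<le> \<bar>real_of_int v\<bar> * \<bar>E0\<bar>"
    using v(1) E0 cf_dist_pos[OF assms(1-3), of m] by (simp add: mult_le_cancel_right1)
  also have "\<dots> \<le> \<bar>of_int u * E1 + of_int v * E0\<bar>"
    using abs_le_abs_add_of_mult_nonneg[OF same_sign] by (simp add: abs_mult)
  also have "of_int u * E1 + of_int v * E0 = of_int j * th - of_int p"
    by (simp add: j p E0_def E1_def algebra_simps)
  finally show ?thesis by (simp add: dnint_def p_def)
qed

lemma dnint_le_cf_dist:
  assumes "0 < th" "th < 1" "th \<notin> \<rat>"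
  shows "dnint (real (cf_q th n) * th) \<le> cf_dist th n"
proof -
  have "dnint (real (cf_q th n) * th) \<le> \<bar>real (cf_q th n) * th - of_int (int (cf_p th n))\<bar>"
    unfolding dnint_def by (rule round_diff_minimal)
  also have "\<dots> = cf_dist th n"
    using cf_q_mult_minus_cf_p[OF assms, of n] cf_dist_pos[OF assms, of n] by (simp add: abs_mult)
  finally show ?thesis .
qed

lemma dnint_le_dnint_add_dist: "dnint x \<le> dnint y + \<bar>x - y\<bar>"
proof -
  have "dnint x \<le> \<bar>x - of_int (round y)\<bar>"
    unfolding dnint_def by (rule round_diff_minimal)
  then show ?thesis unfolding dnint_def by linarith
qed

lemma floor_sqrt_mult_self_le:
  assumes "0 \<le> y"
  shows "of_int (\<lfloor>sqrt y\<rfloor> * \<lfloor>sqrt y\<rfloor>) \<le> y"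
proof -
  have "(0::real) \<le> of_int \<lfloor>sqrt y\<rfloor>" using assms by simp
  then have "of_int \<lfloor>sqrt y\<rfloor> * of_int \<lfloor>sqrt y\<rfloor> \<le> sqrt y * sqrt y"
    by (intro mult_mono) auto
  then show ?thesis using assms by simp
qed

lemma seven_mult_le_of_mult_self_le:
  fixes s a :: int
  assumes "3 \<le> s" "s * s \<le> 4 * a + 5" "1 \<le> a"
  shows "7 * (s - 2) \<le> 6 * a + 2" and "3 \<le> a \<Longrightarrow> 7 * (s - 2) \<le> 6 * a - 1"
proof -
  have large_a: "7 * s \<le> 6 * a + 13" if "3 \<le> a"
  proof (cases "5 \<le> s")
    case True
    then have "0 \<le> (s - 5) * (3 * s + 1)" by simp
    then have "14 * s + 5 \<le> 3 * (s * s)" by (simp add: algebra_simps)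
    then show ?thesis using assms(2) by linarith
  next
    case False
    then have "s \<le> 4" by simp
    then show ?thesis using that by linarith
  qed
  have small_a: "s \<le> 3" if "a < 3"
    using assms that mult_mono[of 4 s 4 s] by linarith
  have "7 * s \<le> 6 * a + 16"
    using large_a small_a assms(3) by (cases "3 \<le> a") auto
  then show "7 * (s - 2) \<le> 6 * a + 2" by (simp add: algebra_simps)
  show "7 * (s - 2) \<le> 6 * a - 1" if "3 \<le> a"
    using large_a[OF that] by (simp add: algebra_simps)
qed

lemma rt_coef_bounds:
  assumes "1 \<le> cf_a th (k + 1)"
  shows "0 \<le> rt_coef th k"
    and "7 * (of_int (rt_coef th k) + 1) \<le> 6 * real (cf_a th (k + 1)) + 2"
    and "3 \<le> cf_a th (k + 1) \<Longrightarrow> 7 * (of_int (rt_coef th k) + 1) \<le> 6 * real (cf_a th (k + 1)) - 1"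
proof -
  define a where "a = cf_a th (k + 1)"
  define s where "s = \<lfloor>sqrt (4 * real a + 5)\<rfloor>"
  have "3 \<le> sqrt (4 * real a + 5)"
    using assms real_sqrt_le_mono[of "3\<^sup>2" "4 * real a + 5"] by (simp add: a_def)
  then have s3: "3 \<le> s" unfolding s_def by linarith
  have "of_int (s * s) \<le> real_of_int (4 * int a + 5)"
    using floor_sqrt_mult_self_le[of "4 * real a + 5"] by (simp add: s_def)
  then have ss: "s * s \<le> 4 * int a + 5" by (simp only: of_int_le_iff)
  have rt: "rt_coef th k = (if a = 4 \<and> cf_a th (k + 2) \<ge> 2 then 2 else if a = 2 then 1 else s - 3)"
    by (simp add: rt_coef_def r_coef_def a_def s_def)
  have "1 \<le> int a" using assms by (simp add: a_def)
  note bounds = seven_mult_le_of_mult_self_le[OF s3 ss this]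
  show "0 \<le> rt_coef th k" using rt s3 by auto
  have "7 * (rt_coef th k + 1) \<le> 6 * int a + 2" using rt bounds(1) by auto
  then have "real_of_int (7 * (rt_coef th k + 1)) \<le> real_of_int (6 * int a + 2)"
    by (simp only: of_int_le_iff)
  then show "7 * (of_int (rt_coef th k) + 1) \<le> 6 * real (cf_a th (k + 1)) + 2"
    by (simp add: a_def)
  assume "3 \<le> cf_a th (k + 1)"
  then have "7 * (rt_coef th k + 1) \<le> 6 * int a - 1" using rt bounds(2) by (auto simp: a_def)
  then have "real_of_int (7 * (rt_coef th k + 1)) \<le> real_of_int (6 * int a - 1)"
    by (simp only: of_int_le_iff)
  then show "7 * (of_int (rt_coef th k) + 1) \<le> 6 * real (cf_a th (k + 1)) - 1"
    by (simp add: a_def)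
qed

lemma L_len_plus_R_len_le:
  assumes "0 < th" "th < 1" "th \<notin> \<rat>" "Suc m \<in> Lambda_set th"
  shows "7 * (L_len th (Suc m) + R_len th (Suc m)) \<le> 6 * cf_dist th m"
proof -
  define k where "k = Suc m"
  define A where "A = real (cf_a th (k + 1))"
  define r where "r = real_of_int (rt_coef th k)"
  define d1 where "d1 = cf_dist th k"
  define d2 where "d2 = cf_dist th (k + 1)"
  define d3 where "d3 = cf_dist th (k + 2)"
  have a1: "1 \<le> cf_a th (k + 1)" using cf_a_Suc_ge_1[OF assms(1-3)] by simp
  have d0: "cf_dist th m = A * d1 + d2"
    using cf_dist_Suc_Suc[OF assms(1-3), of m] by (simp add: d1_def d2_def A_def k_def)
  have d1: "d1 = real (cf_a th (k + 2)) * d2 + d3"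
    using cf_dist_Suc_Suc[OF assms(1-3), of k] by (simp add: d1_def d2_def d3_def)
  have pos: "0 < d1" using cf_dist_pos[OF assms(1-3)] by (simp add: d1_def)
  have dec: "d3 < d2" "d2 < d1"
    using cf_dist_Suc_less[OF assms(1-3)] by (auto simp: d1_def d2_def d3_def)
  have dn: "dnint (real (cf_q th k) * th) \<le> d1" "dnint (real (cf_q th (k + 1)) * th) \<le> d2"
    "dnint (real (cf_q th (k + 2)) * th) \<le> d3"
    unfolding d1_def d2_def d3_def by (rule dnint_le_cf_dist[OF assms(1-3)])+
  have "r * dnint (real (cf_q th k) * th) \<le> r * d1"
    using rt_coef_bounds(1)[OF a1] dn(1) by (simp add: r_def mult_left_mono)
  then have R: "R_len th k \<le> r * d1 + d2" using dn(2) by (simp add: R_len_def r_def)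
  have "7 * L_len th k + 7 * R_len th k \<le> 6 * cf_dist th m"
  proof (cases "cf_a th (k + 2) = 2")
    case True
    have "7 * (r + 1) * d1 \<le> (6 * A + 2) * d1"
      using rt_coef_bounds(2)[OF a1] pos by (intro mult_right_mono) (auto simp: r_def A_def)
    then have "7 * (r * d1) + 7 * d1 \<le> 6 * (A * d1) + 2 * d1" by (simp add: algebra_simps)
    moreover have "L_len th k \<le> d2 + d3" using True dn by (simp add: L_len_def)
    moreover have "d1 = 2 * d2 + d3" using d1 True by simp
    ultimately show ?thesis using R d0 dec by linarith
  next
    case False
    then have "3 \<le> cf_a th (k + 1)" using assms(4) by (auto simp: Lambda_set_def k_def)
    then have "7 * (r + 1) * d1 \<le> (6 * A - 1) * d1"
      using rt_coef_bounds(3)[OF a1] pos by (intro mult_right_mono) (auto simp: r_def A_def)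
    then have "7 * (r * d1) + 7 * d1 \<le> 6 * (A * d1) - d1" by (simp add: algebra_simps)
    moreover have "L_len th k \<le> d1" using False dn by (simp add: L_len_def)
    ultimately show ?thesis using R d0 dec by linarith
  qed
  then show ?thesis by (simp add: k_def distrib_left)
qed

theorem lemma4p5:
  fixes th :: real and k i i' :: nat
  assumes "0 < th" "th < 1" "th \<notin> \<rat>"
    and "k \<in> Lambda_set th"
    and "1 \<le> i" "i \<le> cf_q th k" "1 \<le> i'" "i' \<le> cf_q th k" "i \<noteq> i'"
  shows "\<forall>x \<in> I_int th k i. \<forall>y \<in> I_int th k i'.
           dnint (x - y) \<ge> dnint (real (cf_q th (k - 1)) * th) / 7"
proof (intro ballI)
  fix x y assume "x \<in> I_int th k i" "y \<in> I_int th k i'"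
  then obtain s t where st: "s \<in> I_offsets th k" "t \<in> I_offsets th k"
    and xy: "x - y = of_int (int i - int i') * th + (s - t)"
    unfolding I_int_def by (force simp: algebra_simps)
  obtain m where k: "k = Suc m" using assms(5-9) by (cases k) auto
  have "\<bar>s - t\<bar> < L_len th k + R_len th k"
    using st unfolding I_offsets_def by (auto split: if_splits)
  moreover have "cf_dist th m \<le> dnint (of_int (int i - int i') * th)"
    using cf_dist_le_dnint_mult[OF assms(1-3), of "int i - int i'" m] assms(5-9) k by auto
  moreover have "\<dots> \<le> dnint (x - y) + \<bar>s - t\<bar>"
    using dnint_le_dnint_add_dist[of "of_int (int i - int i') * th" "x - y"] unfolding xy by simp
  moreover have "7 * (L_len th k + R_len th k) \<le> 6 * cf_dist th m"
    using L_len_plus_R_len_le[OF assms(1-3)] assms(4) k by simp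
  moreover have "dnint (real (cf_q th (k - 1)) * th) \<le> cf_dist th m"
    using dnint_le_cf_dist[OF assms(1-3)] k by simp
  ultimately show "dnint (x - y) \<ge> dnint (real (cf_q th (k - 1)) * th) / 7"
    by (simp add: distrib_left)
qed

end
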